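(* Let $\mathcal{M}$ be any $R\times K$ matrix with entries in a finite set $V$, let $\hat v\subseteq V$, and let $1\le L\le U$ be integers such that every stretch of $\hat v$ in every row of $\mathcal{M}$ has length in $[L,U]$. Then for each $0\le k<K-U$, $$ls^+_k+\sum_{j=L}^{U}\#^{\hat v}_{k+j}-(U-L+1)R\le 0,$$ and for each $U\le k<K$, $$ls^-_k+\sum_{j=L}^{U}\#^{\hat v}_{k-j}-(U-L+1)R\le 0,$$ where $ls^+_k=\max(0,\#^{\hat v}_k-\#^{\hat v}_{k-1})$ and $ls^-_k=\max(0,\#^{\hat v}_k-\#^{\hat v}_{k+1})$.
   Context: Columns are indexed $0,\ldots,K-1$ and rows $0,\ldots,R-1$. For $\hat v\subseteq V$ and a column $k$, $\#^{\hat v}_k$ denotes the number of rows $r$ with $\mathcal{M}_{r,k}\in\hat v$, with the convention $\#^{\hat v}_{-1}=\#^{\hat v}_{K}=0$. A stretch of $\hat v$ in row $r$ is a maximal (with respect to inclusion) interval $[a,b]$ of column indices such that $\mathcal{M}_{r,j}\in\hat v$ for all $a\le j\le b$; its length is $b-a+1$. *)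

theory Defs
  imports Main
begin

(* Matrix M with rows 0..R-1 and columns 0..K-1, given as M r k. *)

(* #^vhat_k, with convention 0 outside columns 0..K-1 (in particular at -1 and K). *)
definition colcount :: "(nat \<Rightarrow> nat \<Rightarrow> 'v) \<Rightarrow> nat \<Rightarrow> nat \<Rightarrow> 'v set \<Rightarrow> int \<Rightarrow> int" where
  "colcount M R K vhat k =
     (if 0 \<le> k \<and> k < int K then int (card {r. r < R \<and> M r (nat k) \<in> vhat}) else 0)"

definition is_stretch :: "(nat \<Rightarrow> nat \<Rightarrow> 'v) \<Rightarrow> nat \<Rightarrow> 'v set \<Rightarrow> nat \<Rightarrow> nat \<Rightarrow> nat \<Rightarrow> bool" where
  "is_stretch M K vhat r a b \<longleftrightarrow>
     a \<le> b \<and> b < K \<and> (\<forall>j. a \<le> j \<and> j \<le> b \<longrightarrow> M r j \<in> vhat) \<and>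
     (a = 0 \<or> M r (a - 1) \<notin> vhat) \<and> (b + 1 = K \<or> M r (b + 1) \<notin> vhat)"

definition ls_plus :: "(nat \<Rightarrow> nat \<Rightarrow> 'v) \<Rightarrow> nat \<Rightarrow> nat \<Rightarrow> 'v set \<Rightarrow> int \<Rightarrow> int" where
  "ls_plus M R K vhat k = max 0 (colcount M R K vhat k - colcount M R K vhat (k - 1))"

definition ls_minus :: "(nat \<Rightarrow> nat \<Rightarrow> 'v) \<Rightarrow> nat \<Rightarrow> nat \<Rightarrow> 'v set \<Rightarrow> int \<Rightarrow> int" where
  "ls_minus M R K vhat k = max 0 (colcount M R K vhat k - colcount M R K vhat (k + 1))"

end

theory Submission
  imports Defs
begin

(* Write each column count as a sum over rows of 0/1 cell indicators.
   Since max 0 (sum) is at most the sum of the max 0 terms, ls_plus at column k is bounded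
   by the number of rows in which a stretch of vhat starts at column k.  In such a row the
   stretch has length n with L <= n <= U, so the cell at column k + n lies outside vhat and
   the window k+L .. k+U of that row contributes at most U - L; any other row contributes
   at most U - L + 1 to the window and nothing to ls_plus.  Summing over rows gives the
   first inequality (lemma ls_plus_window_bound) for every matrix.
   The second inequality is the first one applied to the matrix with mirrored columns
   k |-> K - 1 - k: mirroring preserves stretch lengths, turns ls_minus into ls_plus and
   the window k-U .. k-L into a window k'+L .. k'+U. *)

definition ind :: "(nat \<Rightarrow> nat \<Rightarrow> 'v) \<Rightarrow> nat \<Rightarrow> 'v set \<Rightarrow> nat \<Rightarrow> int \<Rightarrow> int" where
  "ind M K vhat r j = (if 0 \<le> j \<and> j < int K \<and> M r (nat j) \<in> vhat then 1 else 0)"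

lemma ind_01: "ind M K vhat r j = 0 \<or> ind M K vhat r j = 1"
  by (simp add: ind_def)

lemma colcount_sum: "colcount M R K vhat j = (\<Sum>r<R. ind M K vhat r j)"
proof (cases "0 \<le> j \<and> j < int K")
  case True
  have "(\<Sum>r<R. ind M K vhat r j) = int (card ({..<R} \<inter> {r. M r (nat j) \<in> vhat}))"
    using True by (simp add: ind_def sum.If_cases)
  also have "{..<R} \<inter> {r. M r (nat j) \<in> vhat} = {r. r < R \<and> M r (nat j) \<in> vhat}"
    by auto
  finally show ?thesis
    using True by (simp add: colcount_def)
next
  case False
  then show ?thesis by (auto simp: colcount_def ind_def)
qed

lemma max_0_sum_le: "max 0 (sum f A) \<le> (\<Sum>x\<in>A. max 0 (f x))" for f :: "'a \<Rightarrow> int"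
proof -
  have "sum f A \<le> (\<Sum>x\<in>A. max 0 (f x))" by (rule sum_mono) simp
  moreover have "0 \<le> (\<Sum>x\<in>A. max 0 (f x))" by (rule sum_nonneg) simp
  ultimately show ?thesis by simp
qed

lemma sum_le_card_minus_one:
  fixes f :: "'a \<Rightarrow> int"
  assumes "finite A" "\<And>j. j \<in> A \<Longrightarrow> f j \<le> 1" "n \<in> A" "f n = 0"
  shows "sum f A \<le> int (card A) - 1"
proof -
  have "sum f A = f n + sum f (A - {n})"
    using assms(1,3) by (simp add: sum.remove)
  also have "sum f (A - {n}) \<le> of_nat (card (A - {n})) * 1"
    using assms(2) by (intro sum_bounded_above) auto
  moreover have "1 \<le> card A"
    using assms(1,3) by (simp add: Suc_le_eq card_gt_0_iff) blast
  ultimately show ?thesis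
    using assms by (simp add: card_Diff_singleton of_nat_diff)
qed

lemma stretch_start_gap:
  assumes lengths: "\<And>a b. is_stretch M K vhat r a b \<Longrightarrow> L \<le> b - a + 1 \<and> b - a + 1 \<le> U"
    and kU: "k + U < K" and in_k: "M r k \<in> vhat" and left: "k = 0 \<or> M r (k - 1) \<notin> vhat"
  shows "\<exists>n. L \<le> n \<and> n \<le> U \<and> M r (k + n) \<notin> vhat"
proof -
  (* n is the length of the stretch starting at k *)
  define P where "P n \<longleftrightarrow> 1 \<le> n \<and> (K \<le> k + n \<or> M r (k + n) \<notin> vhat)" for n
  define n where "n = Least P"
  have "P K" using kU by (simp add: P_def)
  then have Pn: "P n" unfolding n_def by (rule LeastI)
  have below: "\<not> P m" if "m < n" for m
    using that unfolding n_def by (rule not_less_Least)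
  have n1: "1 \<le> n" using Pn by (simp add: P_def)
  have inside: "M r j \<in> vhat" if "k \<le> j" "j < k + n" for j
  proof (cases "j = k")
    case False
    then have "\<not> P (j - k)" using below that by simp
    then show ?thesis using False that by (simp add: P_def)
  qed (use in_k in simp)
  have end_lt: "k + n - 1 < K"
    using below[of "n - 1"] n1 kU by (cases "n = 1") (auto simp: P_def)
  have "is_stretch M K vhat r k (k + n - 1)"
    unfolding is_stretch_def using n1 end_lt inside left Pn by (auto simp: P_def)
  then have "L \<le> n \<and> n \<le> U"
    using lengths n1 by fastforce
  moreover from this have "M r (k + n) \<notin> vhat"
    using Pn kU by (simp add: P_def)
  ultimately show ?thesis by blast
qed

lemma row_window_bound:
  assumes lengths: "\<And>a b. is_stretch M K vhat r a b \<Longrightarrow> L \<le> b - a + 1 \<and> b - a + 1 \<le> U"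
    and "L \<le> U" and k: "k + U < K"
  shows "max 0 (ind M K vhat r (int k) - ind M K vhat r (int k - 1))
           + (\<Sum>j = int L..int U. ind M K vhat r (int k + j)) \<le> int U - int L + 1"
proof -
  let ?I = "{int L..int U}"
  have card_I: "int (card ?I) = int U - int L + 1" using \<open>L \<le> U\<close> by simp
  have ind_le: "\<And>j. ind M K vhat r j \<le> 1" by (simp add: ind_def)
  show ?thesis
  proof (cases "ind M K vhat r (int k) = 1 \<and> ind M K vhat r (int k - 1) = 0")
    case True
    then have in_k: "M r k \<in> vhat"
      by (metis ind_def zero_neq_one nat_int)
    have "k = 0 \<or> M r (k - 1) \<notin> vhat"
    proof (cases "k = 0")
      case False
      then have "ind M K vhat r (int (k - 1)) = 0" using True by (simp add: of_nat_diff)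
      moreover have "k - 1 < K" using k by simp
      ultimately show ?thesis unfolding ind_def by (simp split: if_split_asm)
    qed simp
    then obtain n where n: "L \<le> n" "n \<le> U" "M r (k + n) \<notin> vhat"
      using stretch_start_gap[of M K vhat r L U k, OF lengths k in_k] by blast
    have "ind M K vhat r (int k + int n) = 0"
      using n by (simp add: ind_def nat_add_distrib flip: of_nat_add)
    then have "(\<Sum>j\<in>?I. ind M K vhat r (int k + j)) \<le> int (card ?I) - 1"
      using n ind_le by (intro sum_le_card_minus_one[of _ _ "int n"]) auto
    then show ?thesis using True card_I by simp
  next
    case False
    then have "max 0 (ind M K vhat r (int k) - ind M K vhat r (int k - 1)) = 0"
      using ind_01[of M K vhat r "int k"] ind_01[of M K vhat r "int k - 1"] by auto
    moreover have "(\<Sum>j\<in>?I. ind M K vhat r (int k + j)) \<le> of_nat (card ?I) * 1"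
      using ind_le by (intro sum_bounded_above) auto
    ultimately show ?thesis using card_I by simp
  qed
qed

lemma ls_plus_window_bound:
  assumes lengths: "\<And>r a b. r < R \<Longrightarrow> is_stretch M K vhat r a b \<Longrightarrow> L \<le> b - a + 1 \<and> b - a + 1 \<le> U"
    and "L \<le> U" and "0 \<le> k" and k_bound: "k < int K - int U"
  shows "ls_plus M R K vhat k + (\<Sum>j = int L..int U. colcount M R K vhat (k + j))
           - (int U - int L + 1) * int R \<le> 0"
proof -
  let ?I = "{int L..int U}"
  let ?step = "\<lambda>r. max 0 (ind M K vhat r k - ind M K vhat r (k - 1))"
  let ?window = "\<lambda>r. \<Sum>j\<in>?I. ind M K vhat r (k + j)"
  obtain k' where k': "k = int k'" using \<open>0 \<le> k\<close> nonneg_eq_int by blast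
  have "ls_plus M R K vhat k = max 0 (\<Sum>r<R. ind M K vhat r k - ind M K vhat r (k - 1))"
    by (simp add: ls_plus_def colcount_sum sum_subtractf)
  also have "\<dots> \<le> (\<Sum>r<R. ?step r)" by (rule max_0_sum_le)
  finally have step: "ls_plus M R K vhat k \<le> (\<Sum>r<R. ?step r)" .
  have window: "(\<Sum>j\<in>?I. colcount M R K vhat (k + j)) = (\<Sum>r<R. ?window r)"
    by (simp add: colcount_sum sum.swap[of _ ?I])
  have "(\<Sum>r<R. ?step r) + (\<Sum>r<R. ?window r) = (\<Sum>r<R. ?step r + ?window r)"
    by (simp add: sum.distrib)
  also have "\<dots> \<le> (\<Sum>r<R. int U - int L + 1)"
  proof (rule sum_mono)
    fix r assume "r \<in> {..<R}"
    then show "?step r + ?window r \<le> int U - int L + 1"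
      using row_window_bound[of M K vhat r L U k'] lengths \<open>L \<le> U\<close> k_bound k' by simp
  qed
  also have "\<dots> = (int U - int L + 1) * int R" by simp
  finally show ?thesis using step window by linarith
qed

definition mirror :: "nat \<Rightarrow> (nat \<Rightarrow> nat \<Rightarrow> 'v) \<Rightarrow> nat \<Rightarrow> nat \<Rightarrow> 'v" where
  "mirror K M r k = M r (K - 1 - k)"

lemma colcount_mirror: "colcount (mirror K M) R K vhat k = colcount M R K vhat (int K - 1 - k)"
proof (cases "0 \<le> k \<and> k < int K")
  case True
  then have "nat (int K - 1 - k) = K - 1 - nat k" by linarith
  then show ?thesis using True by (simp add: colcount_def mirror_def)
qed (auto simp: colcount_def)

lemma is_stretch_mirror:
  assumes "is_stretch (mirror K M) K vhat r a b"
  shows "is_stretch M K vhat r (K - 1 - b) (K - 1 - a) \<and> (K - 1 - a) - (K - 1 - b) = b - a"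
proof -
  have ab: "a \<le> b" "b < K" using assms by (auto simp: is_stretch_def)
  have "\<forall>j. K - 1 - b \<le> j \<and> j \<le> K - 1 - a \<longrightarrow> M r j \<in> vhat"
  proof (intro allI impI)
    fix j assume "K - 1 - b \<le> j \<and> j \<le> K - 1 - a"
    then have "a \<le> K - 1 - j \<and> K - 1 - j \<le> b" "K - 1 - (K - 1 - j) = j" using ab by auto
    then show "M r j \<in> vhat" using assms by (metis is_stretch_def mirror_def)
  qed
  moreover have "K - 1 - b = 0 \<or> M r (K - 1 - b - 1) \<notin> vhat"
    using assms ab by (auto simp: is_stretch_def mirror_def Suc_diff_Suc)
  moreover have "K - 1 - a + 1 = K \<or> M r (K - 1 - a + 1) \<notin> vhat"
  proof (cases "a = 0")
    case False
    then have "K - 1 - (a - 1) = K - 1 - a + 1" using ab by simp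
    then show ?thesis using assms False by (auto simp: is_stretch_def mirror_def)
  qed (use ab in simp)
  ultimately show ?thesis using ab by (simp add: is_stretch_def)
qed

lemma ls_plus_mirror:
  "ls_plus (mirror K M) R K vhat (int K - 1 - k) = ls_minus M R K vhat k"
  by (simp add: ls_plus_def ls_minus_def colcount_mirror algebra_simps)

theorem mainTheorem14:
  fixes M :: "nat \<Rightarrow> nat \<Rightarrow> 'v" and V vhat :: "'v set" and R K L U :: nat
  assumes "finite V"
    and "\<And>r k. r < R \<Longrightarrow> k < K \<Longrightarrow> M r k \<in> V"
    and "vhat \<subseteq> V"
    and "1 \<le> L" and "L \<le> U"
    and "\<And>r a b. r < R \<Longrightarrow> is_stretch M K vhat r a b \<Longrightarrow> L \<le> b - a + 1 \<and> b - a + 1 \<le> U"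
  shows "(\<forall>k. 0 \<le> k \<and> k < int K - int U \<longrightarrow>
            ls_plus M R K vhat k + (\<Sum>j = int L..int U. colcount M R K vhat (k + j))
              - (int U - int L + 1) * int R \<le> 0)
       \<and> (\<forall>k. int U \<le> k \<and> k < int K \<longrightarrow>
            ls_minus M R K vhat k + (\<Sum>j = int L..int U. colcount M R K vhat (k - j))
              - (int U - int L + 1) * int R \<le> 0)"
proof (intro conjI allI impI)
  fix k :: int
  assume "0 \<le> k \<and> k < int K - int U"
  then show "ls_plus M R K vhat k + (\<Sum>j = int L..int U. colcount M R K vhat (k + j))
               - (int U - int L + 1) * int R \<le> 0"
    using ls_plus_window_bound[of R M K vhat L U k] assms(5,6) by blast
next
  fix k :: int
  assume k: "int U \<le> k \<and> k < int K"
  have mirror_lengths: "L \<le> b - a + 1 \<and> b - a + 1 \<le> U"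
    if "r < R" "is_stretch (mirror K M) K vhat r a b" for r a b
    using assms(6)[OF \<open>r < R\<close>] is_stretch_mirror[OF that(2)] by fastforce
  have "ls_plus (mirror K M) R K vhat (int K - 1 - k)
          + (\<Sum>j = int L..int U. colcount (mirror K M) R K vhat (int K - 1 - k + j))
          - (int U - int L + 1) * int R \<le> 0"
    using ls_plus_window_bound[of R "mirror K M" K vhat L U "int K - 1 - k"] mirror_lengths
      assms(5) k by simp
  then show "ls_minus M R K vhat k + (\<Sum>j = int L..int U. colcount M R K vhat (k - j))
               - (int U - int L + 1) * int R \<le> 0"
    by (simp add: ls_plus_mirror colcount_mirror)
qed

end
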